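(* Let $\Phi$ be a set composition of $[n]$. Then $$\mathbf{F}_\Phi=\sum_{\Psi\text{ reforms }\Phi}\mathbf{M}_\Psi,$$ and hence $\{\mathbf{F}_\Phi\}$ (over all set compositions $\Phi$) is a basis of $\mathrm{NCQSym}(\mathbf{x})$.
   Context: A set composition $\Phi=(\Phi_1|\cdots|\Phi_k)$ of $[n]$ is an ordered list of disjoint nonempty sets with union $[n]$; blocks are written with elements in increasing order. $\Psi$ reforms $\Phi$ if $\Psi$ is obtained from $\Phi$ (written as a word with bars) by inserting some bars, the numbers remaining in the same order; e.g. $(1|3|2|4|56)$ reforms $(13|2|4|56)$ but $(3|1|2|4|56)$ does not. $\mathbf{M}_\Phi=\sum\mathbf{x}_{i_1}\cdots\mathbf{x}_{i_n}$ (noncommuting variables) over tuples with $i_j=i_\ell$ if $j,\ell$ are in the same block and $i_j<i_\ell$ if $j\in\Phi_p,\ell\in\Phi_q$, $p<q$. $\mathrm{NCQSym}(\mathbf{x})$ is the space of bounded-degree noncommutative series in which, for each set composition, all such monomials have equal coefficients. An edge-coloured digraph is a finite simple digraph with each edge dashed, solid ($\rightarrow$) or double ($\Rightarrow$); proper vertex-colourings $\kappa:V\to\mathbb{P}$ satisfy $\kappa(a)\ne\kappa(b)$, $\kappa(a)<\kappa(b)$, $\kappa(a)\le\kappa(b)$ for dashed, solid, double edges $(a,b)$. For a labelling bijection $L:V(G)\to[|V(G)|]$, $\mathscr{Y}_{(G,L)}(\mathbf{x})=\sum_\kappa\mathbf{x}_{\kappa(L^{-1}(1))}\cdots\mathbf{x}_{\kappa(L^{-1}(|V(G)|))}$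 over proper vertex-colourings. For a finite $A=\{a_1<\dots<a_m\}\subseteq\mathbb{P}$, $Q_A$ is the directed path $v_1\Rightarrow v_2\Rightarrow\cdots\Rightarrow v_m$ (double edges) with $v_i$ labelled $a_i$. The solid sum of two labelled digraphs is their disjoint union with a solid edge from every vertex of the first to every vertex of the second. Define $\mathbf{F}_\Phi=\mathscr{Y}_{(G,L)}(\mathbf{x})$ with $(G,L)=Q_{\Phi_1}$ solid-sum $Q_{\Phi_2}$ solid-sum $\cdots$ solid-sum $Q_{\Phi_k}$. *)

theory Defs
  imports Main "HOL.Vector_Spaces" "HOL-Library.Function_Algebras" "HOL-Library.FuncSet"
begin

(* Words over the alphabet of positive integers x_1, x_2, ... are nat lists
   (all letters > 0); a noncommutative series is its coefficient function. *)
type_synonym 'a ncseries = "nat list \<Rightarrow> 'a"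

definition set_comp :: "nat \<Rightarrow> nat set list \<Rightarrow> bool" where
  "set_comp n \<Phi> \<longleftrightarrow>
     (\<forall>B\<in>set \<Phi>. B \<noteq> {}) \<and>
     (\<forall>i<length \<Phi>. \<forall>j<length \<Phi>. i \<noteq> j \<longrightarrow> \<Phi>!i \<inter> \<Phi>!j = {}) \<and>
     \<Union>(set \<Phi>) = {1..n}"

definition all_set_comps :: "nat set list set" where
  "all_set_comps = {\<Phi>. \<exists>n. set_comp n \<Phi>}"

(* The word of a set composition (blocks written increasingly) and its bar positions
   (bar after the first b letters). *)
definition sc_word :: "nat set list \<Rightarrow> nat list" where
  "sc_word \<Phi> = concat (map sorted_list_of_set \<Phi>)"

definition sc_bars :: "nat set list \<Rightarrow> nat set" where
  "sc_bars \<Phi> = {(\<Sum>j<i. card (\<Phi>!j)) | i. i \<le> length \<Phi>}"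

(* \<Psi> reforms \<Phi>: obtained by inserting bars, letters staying in the same order. *)
definition reforms :: "nat set list \<Rightarrow> nat set list \<Rightarrow> bool" where
  "reforms \<Psi> \<Phi> \<longleftrightarrow> sc_word \<Psi> = sc_word \<Phi> \<and> sc_bars \<Phi> \<subseteq> sc_bars \<Psi>"

(* Monomial x_{i_1}...x_{i_n} (positions 1..n, list index j-1) belongs to M_\<Phi>. *)
definition M_matches :: "nat \<Rightarrow> nat set list \<Rightarrow> nat list \<Rightarrow> bool" where
  "M_matches n \<Phi> w \<longleftrightarrow> length w = n \<and> (\<forall>c\<in>set w. 0 < c) \<and>
     (\<forall>p<length \<Phi>. \<forall>j\<in>\<Phi>!p. \<forall>l\<in>\<Phi>!p. w!(j-1) = w!(l-1)) \<and>
     (\<forall>p<length \<Phi>. \<forall>q<length \<Phi>. p < q \<longrightarrow> (\<forall>j\<in>\<Phi>!p. \<forall>l\<in>\<Phi>!q. w!(j-1) < w!(l-1)))"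

definition Mbasis :: "nat \<Rightarrow> nat set list \<Rightarrow> 'a::field ncseries" where
  "Mbasis n \<Phi> = (\<lambda>w. if M_matches n \<Phi> w then 1 else 0)"

definition NCQSym :: "'a::field ncseries set" where
  "NCQSym = {f. (\<exists>d. \<forall>w. d < length w \<longrightarrow> f w = 0) \<and>
                (\<forall>w. 0 \<in> set w \<longrightarrow> f w = 0) \<and>
                (\<forall>n \<Phi> w w'. set_comp n \<Phi> \<longrightarrow> M_matches n \<Phi> w \<longrightarrow> M_matches n \<Phi> w'
                    \<longrightarrow> f w = f w')}"

record 'v ecdigraph =
  verts :: "'v set"
  dashed :: "('v \<times> 'v) set"
  solid :: "('v \<times> 'v) set"
  double :: "('v \<times> 'v) set"

definition proper_colouring :: "'v ecdigraph \<Rightarrow> ('v \<Rightarrow> nat) \<Rightarrow> bool" where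
  "proper_colouring G \<kappa> \<longleftrightarrow> (\<forall>v\<in>verts G. 0 < \<kappa> v) \<and>
     (\<forall>(a,b)\<in>dashed G. \<kappa> a \<noteq> \<kappa> b) \<and>
     (\<forall>(a,b)\<in>solid G. \<kappa> a < \<kappa> b) \<and>
     (\<forall>(a,b)\<in>double G. \<kappa> a \<le> \<kappa> b)"

(* Y_{(G,L)}: coefficient of a word = number of proper colourings \<kappa> : V \<rightarrow> P
   (as extensional functions on V) reading to that word via the labelling L. *)
definition Y :: "'v ecdigraph \<Rightarrow> ('v \<Rightarrow> nat) \<Rightarrow> 'a::field ncseries" where
  "Y G L = (\<lambda>w. of_nat (card {\<kappa>. \<kappa> \<in> extensional (verts G) \<and> proper_colouring G \<kappa> \<and>
        w = map (\<lambda>i. \<kappa> (inv_into (verts G) L i)) [1..<card (verts G) + 1]}))"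

(* Q_A: double-edge path a_1 \<Rightarrow> a_2 \<Rightarrow> ... \<Rightarrow> a_m; the vertex labelled a_i is a_i itself. *)
definition Q :: "nat set \<Rightarrow> nat ecdigraph" where
  "Q A = \<lparr> verts = A, dashed = {}, solid = {},
           double = {(a,b). a \<in> A \<and> b \<in> A \<and> a < b \<and> \<not>(\<exists>c\<in>A. a < c \<and> c < b)} \<rparr>"

(* Solid sum (of graphs with disjoint vertex sets, as for the Q_{\<Phi>_i}). *)
definition solid_sum :: "'v ecdigraph \<Rightarrow> 'v ecdigraph \<Rightarrow> 'v ecdigraph" where
  "solid_sum G H = \<lparr> verts = verts G \<union> verts H, dashed = dashed G \<union> dashed H,
      solid = solid G \<union> solid H \<union> (verts G \<times> verts H), double = double G \<union> double H \<rparr>"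

definition empty_ecdigraph :: "'v ecdigraph" where
  "empty_ecdigraph = \<lparr> verts = {}, dashed = {}, solid = {}, double = {} \<rparr>"

definition Fbasis :: "nat set list \<Rightarrow> 'a::field ncseries" where
  "Fbasis \<Phi> = Y (foldr solid_sum (map Q \<Phi>) empty_ecdigraph) id"

abbreviation ser_scale :: "'a::field \<Rightarrow> 'a ncseries \<Rightarrow> 'a ncseries" where
  "ser_scale c f \<equiv> (\<lambda>w. c * f w)"

end

(*
  Reading a proper colouring of the graph of \<Phi> as a word, F_\<Phi> is the indicator function of
  the words that increase weakly inside each block of \<Phi> and strictly from one block to the
  next. Such a word w is a monomial of exactly one M_\<Psi>, namely for the packing \<Psi> of w (its
  level sets in increasing order of the letters), and the monotonicity of w says precisely that
  \<Psi> reforms \<Phi>: this is the expansion. Every proper reform separates strictly more pairs of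
  elements into different blocks, so evaluating at the canonical word of \<Phi> shows that the
  expansion is unitriangular. Hence the F_\<Phi> are independent, and solving the triangular
  system expresses every M_\<Psi>, and with it every element of NCQSym, through them.
*)
theory Submission
  imports Defs "HOL-Library.Product_Lexorder"
begin

lemma card_image_eq_if_same_fibres:
  assumes "\<And>x y. x \<in> A \<Longrightarrow> y \<in> A \<Longrightarrow> f x = f y \<longleftrightarrow> g x = g y"
  shows "card (f ` A) = card (g ` A)"
proof -
  let ?h = "g \<circ> inv_into A f"
  have inv_f: "inv_into A f (f x) \<in> A" "f (inv_into A f (f x)) = f x" if "x \<in> A" for x
    using that by (auto intro: inv_into_into f_inv_into_f)
  have g_inv_f: "g (inv_into A f (f x)) = g x" if "x \<in> A" for x
    using assms inv_f that by blast
  have "inj_on ?h (f ` A)"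
  proof (rule inj_onI, clarsimp)
    fix x y assume "x \<in> A" "y \<in> A" "g (inv_into A f (f x)) = g (inv_into A f (f y))"
    then show "f x = f y" using assms g_inv_f by metis
  qed
  moreover have "?h ` (f ` A) = g ` A"
    using g_inv_f by (auto simp: image_iff)
  ultimately show ?thesis by (metis card_image)
qed

lemma ball_atLeastAtMost_Suc: "(\<forall>j\<in>{1..n::nat}. P j) \<longleftrightarrow> (\<forall>i<n. P (Suc i))"
proof (intro iffI allI impI ballI)
  fix j assume "\<forall>i<n. P (Suc i)" "j \<in> {1..n}"
  then show "P j" by (cases j) auto
qed auto

lemma mono_on_if_covers:
  fixes A :: "nat set" and \<kappa> :: "nat \<Rightarrow> nat"
  assumes covers: "\<And>a b. a \<in> A \<Longrightarrow> b \<in> A \<Longrightarrow> a < b \<Longrightarrow> \<not> (\<exists>c\<in>A. a < c \<and> c < b) \<Longrightarrow> \<kappa> a \<le> \<kappa> b"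
  shows "mono_on A \<kappa>"
proof (rule mono_onI)
  fix a b assume "a \<in> A" "b \<in> A" "a \<le> b"
  then show "\<kappa> a \<le> \<kappa> b"
  proof (induction "b - a" arbitrary: a b rule: less_induct)
    case less
    show ?case
    proof (cases "\<exists>c\<in>A. a < c \<and> c < b")
      case True
      then obtain c where "c \<in> A" "a < c" "c < b" by blast
      with less.prems have "\<kappa> a \<le> \<kappa> c" "\<kappa> c \<le> \<kappa> b"
        by (auto intro: less.hyps)
      then show ?thesis by simp
    next
      case False
      with less covers show ?thesis by (cases "a = b") auto
    qed
  qed
qed

lemma sorted_wrt_concat:
  assumes "\<forall>xs\<in>set xss. sorted_wrt R xs"
    and "\<forall>i j. i < j \<longrightarrow> j < length xss \<longrightarrow> (\<forall>a\<in>set (xss!i). \<forall>b\<in>set (xss!j). R a b)"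
  shows "sorted_wrt R (concat xss)"
  using assms
proof (induction xss)
  case (Cons xs xss)
  have "sorted_wrt R (concat xss)"
  proof (rule Cons.IH)
    show "\<forall>i j. i < j \<longrightarrow> j < length xss \<longrightarrow> (\<forall>a\<in>set (xss!i). \<forall>b\<in>set (xss!j). R a b)"
    proof (intro allI impI ballI)
      fix i j a b assume "i < j" "j < length xss" "a \<in> set (xss!i)" "b \<in> set (xss!j)"
      then show "R a b" using Cons.prems(2)[rule_format, of "Suc i" "Suc j" a b] by simp
    qed
  qed (use Cons.prems(1) in simp)
  moreover have "R a b" if "a \<in> set xs" "b \<in> set (concat xss)" for a b
  proof -
    from that obtain ys where "ys \<in> set xss" "b \<in> set ys" by auto
    then obtain j where "j < length xss" "b \<in> set (xss!j)" by (metis in_set_conv_nth)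
    with that show ?thesis using Cons.prems(2)[rule_format, of 0 "Suc j" a b] by simp
  qed
  ultimately show ?case using Cons.prems(1) by (simp add: sorted_wrt_append)
qed simp

lemma strict_sorted_map_less_transfer:
  fixes f :: "'a \<Rightarrow> 'b :: linorder" and g :: "'a \<Rightarrow> 'c :: linorder"
  assumes f: "sorted_wrt (<) (map f xs)" and g: "sorted_wrt (<) (map g xs)"
    and "x \<in> set xs" "y \<in> set xs" and less: "f x < f y"
  shows "g x < g y"
proof -
  from assms obtain a b where a: "a < length xs" "xs!a = x" and b: "b < length xs" "xs!b = y"
    by (metis in_set_conv_nth)
  have "\<not> b < a"
  proof
    assume "b < a"
    then have "map f xs ! b < map f xs ! a" using sorted_wrt_nth_less[OF f] a(1) by simp
    with a b less show False by simp
  qed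
  moreover have "a \<noteq> b" using less a b by auto
  ultimately have "a < b" by simp
  then have "map g xs ! a < map g xs ! b" using sorted_wrt_nth_less[OF g] b(1) by simp
  with a b show ?thesis by simp
qed

lemma set_take_eq_imp_eq:
  assumes "distinct xs" "b \<le> length xs" "b' \<le> length xs" "set (take b xs) = set (take b' xs)"
  shows "b = b'"
proof -
  have card_prefix: "card (set (take c xs)) = c" if "c \<le> length xs" for c
    using distinct_card[OF distinct_take[OF assms(1)], of c] that by simp
  have "b = card (set (take b xs))" using card_prefix[OF assms(2)] by simp
  also have "\<dots> = card (set (take b' xs))" by (simp only: assms(4))
  also have "\<dots> = b'" using card_prefix[OF assms(3)] .
  finally show ?thesis .
qed

lemma sum_fun_apply: "(\<Sum>x\<in>A. f x) w = (\<Sum>x\<in>A. f x w)"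
  by (induction A rule: infinite_finite_induct) auto

text \<open>The scalar multiplication is \<open>ser_scale\<close>, for functions on an arbitrary type.\<close>

interpretation pointwise: module "\<lambda>(c :: 'a :: field) (f :: 'b \<Rightarrow> 'a) w. c * f w"
  by unfold_locales (auto simp: fun_eq_iff algebra_simps)

lemma pointwise_independent_if_triangular:
  fixes v :: "'i \<Rightarrow> 'b \<Rightarrow> 'a :: field" and p :: "'i \<Rightarrow> 'b" and \<mu> :: "'i \<Rightarrow> nat"
  assumes diag: "\<And>i. i \<in> I \<Longrightarrow> v i (p i) \<noteq> 0"
    and lower: "\<And>i j. i \<in> I \<Longrightarrow> j \<in> I \<Longrightarrow> v j \<noteq> v i \<Longrightarrow> v j (p i) \<noteq> 0 \<Longrightarrow> \<mu> j < \<mu> i"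
  shows "pointwise.independent (v ` I)"
proof
  assume "pointwise.dependent (v ` I)"
  then obtain T u where T: "finite T" "T \<subseteq> v ` I"
    and sum0: "(\<Sum>x\<in>T. (\<lambda>w. u x * x w)) = 0" and "\<exists>x\<in>T. u x \<noteq> 0"
    unfolding pointwise.dependent_explicit by blast
  then obtain i\<^sub>0 where "i\<^sub>0 \<in> I \<and> v i\<^sub>0 \<in> T \<and> u (v i\<^sub>0) \<noteq> 0" by blast
  then obtain i where i: "i \<in> I" "v i \<in> T" "u (v i) \<noteq> 0"
    and least: "\<And>j. j \<in> I \<and> v j \<in> T \<and> u (v j) \<noteq> 0 \<Longrightarrow> \<mu> i \<le> \<mu> j"
    using ex_has_least_nat[of "\<lambda>i. i \<in> I \<and> v i \<in> T \<and> u (v i) \<noteq> 0" i\<^sub>0 \<mu>] by blast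
  have vanish: "u x * x (p i) = 0" if x: "x \<in> T" "x \<noteq> v i" for x
  proof (rule ccontr)
    assume "u x * x (p i) \<noteq> 0"
    moreover obtain j where "j \<in> I" "x = v j" using x(1) T(2) by blast
    ultimately have "\<mu> j < \<mu> i" "\<mu> i \<le> \<mu> j"
      using lower[OF i(1)] least x by auto
    then show False by simp
  qed
  have "(\<Sum>x\<in>T. u x * x (p i)) = u (v i) * v i (p i) + (\<Sum>x\<in>T - {v i}. u x * x (p i))"
    using T(1) i(2) by (rule sum.remove)
  also have "(\<Sum>x\<in>T - {v i}. u x * x (p i)) = 0"
    using vanish by (intro sum.neutral) blast
  also have "u (v i) * v i (p i) + 0 \<noteq> 0" using i(3) diag[OF i(1)] by simp
  finally have "(\<Sum>x\<in>T. u x * x (p i)) \<noteq> 0" .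
  moreover have "(\<Sum>x\<in>T. u x * x (p i)) = 0"
    using fun_cong[OF sum0, of "p i"] by (simp add: sum_fun_apply)
  ultimately show False by simp
qed

section \<open>Set compositions\<close>

definition block_index :: "nat set list \<Rightarrow> nat \<Rightarrow> nat" where
  "block_index \<Phi> j = (THE p. p < length \<Phi> \<and> j \<in> \<Phi>!p)"

lemma set_comp_block_subset: "set_comp n \<Phi> \<Longrightarrow> p < length \<Phi> \<Longrightarrow> \<Phi>!p \<subseteq> {1..n}"
  unfolding set_comp_def by (metis Sup_upper nth_mem)

lemma set_comp_block_nonempty: "set_comp n \<Phi> \<Longrightarrow> p < length \<Phi> \<Longrightarrow> \<Phi>!p \<noteq> {}"
  unfolding set_comp_def by auto

lemma set_comp_finite_blocks: "set_comp n \<Phi> \<Longrightarrow> B \<in> set \<Phi> \<Longrightarrow> finite B"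
  unfolding set_comp_def by (metis Union_upper finite_atLeastAtMost finite_subset)

lemma block_index_eqI: "set_comp n \<Phi> \<Longrightarrow> p < length \<Phi> \<Longrightarrow> j \<in> \<Phi>!p \<Longrightarrow> block_index \<Phi> j = p"
  unfolding block_index_def set_comp_def by (rule the_equality) blast+

lemma block_index_mem:
  assumes "set_comp n \<Phi>" "j \<in> {1..n}"
  shows "block_index \<Phi> j < length \<Phi>" "j \<in> \<Phi>!block_index \<Phi> j"
proof -
  obtain p where "p < length \<Phi>" "j \<in> \<Phi>!p"
    using assms unfolding set_comp_def by (metis UnionE in_set_conv_nth)
  then show "block_index \<Phi> j < length \<Phi>" "j \<in> \<Phi>!block_index \<Phi> j"
    using block_index_eqI[OF assms(1)] by simp_all
qed

lemma set_comp_block_eq: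
  "set_comp n \<Phi> \<Longrightarrow> p < length \<Phi> \<Longrightarrow> \<Phi>!p = {j\<in>{1..n}. block_index \<Phi> j = p}"
  using set_comp_block_subset block_index_eqI block_index_mem by blast

lemma finite_set_comps: "finite {\<Phi>. set_comp n \<Phi>}"
proof -
  have "set \<Phi> \<subseteq> Pow {1..n} \<and> length \<Phi> \<le> 2^n" if \<Phi>: "set_comp n \<Phi>" for \<Phi>
  proof
    have "distinct \<Phi>"
      using \<Phi> unfolding distinct_conv_nth set_comp_def by (metis Int_absorb nth_mem)
    moreover show sub: "set \<Phi> \<subseteq> Pow {1..n}"
      using \<Phi> unfolding set_comp_def by blast
    ultimately have "length \<Phi> \<le> card (Pow {1..n})"
      by (metis card_mono distinct_card finite_Pow_iff finite_atLeastAtMost)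
    then show "length \<Phi> \<le> 2^n" by (simp add: card_Pow)
  qed
  then have "{\<Phi>. set_comp n \<Phi>} \<subseteq> {xs. set xs \<subseteq> Pow {1..n} \<and> length xs \<le> 2^n}" by blast
  then show ?thesis by (rule finite_subset) (intro finite_lists_length_le, simp)
qed

lemma block_index_image_below:
  assumes \<Phi>: "set_comp n \<Phi>" and "p \<le> length \<Phi>"
  shows "block_index \<Phi> ` {j\<in>{1..n}. block_index \<Phi> j < p} = {..<p}"
proof
  show "{..<p} \<subseteq> block_index \<Phi> ` {j\<in>{1..n}. block_index \<Phi> j < p}"
  proof
    fix q assume "q \<in> {..<p}"
    with assms have q: "q < length \<Phi>" "q < p" by auto
    then obtain j where "j \<in> \<Phi>!q" using set_comp_block_nonempty[OF \<Phi>] by blast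
    then have "j \<in> {1..n}" "block_index \<Phi> j = q" using set_comp_block_eq[OF \<Phi> q(1)] by auto
    with q show "q \<in> block_index \<Phi> ` {j\<in>{1..n}. block_index \<Phi> j < p}"
      by (intro image_eqI[of _ _ j]) auto
  qed
qed blast

text \<open>The index of the block of \<open>j\<close> is the number of blocks below it.\<close>

lemma set_comp_eqI:
  assumes \<Phi>: "set_comp n \<Phi>" and \<Psi>: "set_comp n \<Psi>"
    and less_iff: "\<And>j l. j \<in> {1..n} \<Longrightarrow> l \<in> {1..n} \<Longrightarrow>
        block_index \<Phi> j < block_index \<Phi> l \<longleftrightarrow> block_index \<Psi> j < block_index \<Psi> l"
  shows "\<Phi> = \<Psi>"
proof -
  have same_fibres: "block_index \<Phi> j = block_index \<Phi> l \<longleftrightarrow> block_index \<Psi> j = block_index \<Psi> l"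
    if "j \<in> {1..n}" "l \<in> {1..n}" for j l
    using less_iff[OF that] less_iff[OF that(2,1)] by (metis linorder_neqE_nat order_less_irrefl)
  have count_below: "card (block_index X ` {j\<in>{1..n}. block_index X j < p}) = p"
    if "set_comp n X" "p \<le> length X" for X p
    using block_index_image_below[OF that] by simp
  have "length \<Phi> = length \<Psi>"
  proof -
    have all: "{j\<in>{1..n}. block_index X j < length X} = {1..n}" if "set_comp n X" for X
      using block_index_mem[OF that] by blast
    show ?thesis
      using count_below[OF \<Phi> order_refl] count_below[OF \<Psi> order_refl]
        card_image_eq_if_same_fibres[of "{1..n}", OF same_fibres]
      unfolding all[OF \<Phi>] all[OF \<Psi>] by simp
  qed
  moreover have "block_index \<Phi> j = block_index \<Psi> j" if j: "j \<in> {1..n}" for j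
  proof -
    define below where "below = {l\<in>{1..n}. block_index \<Phi> l < block_index \<Phi> j}"
    have below_\<Psi>: "below = {l\<in>{1..n}. block_index \<Psi> l < block_index \<Psi> j}"
      unfolding below_def using less_iff j by blast
    have "block_index \<Phi> j = card (block_index \<Phi> ` below)"
      unfolding below_def using count_below[OF \<Phi>] block_index_mem(1)[OF \<Phi> j] by simp
    also have "\<dots> = card (block_index \<Psi> ` below)"
      by (rule card_image_eq_if_same_fibres) (auto simp: below_def same_fibres)
    also have "\<dots> = block_index \<Psi> j"
      unfolding below_\<Psi> using count_below[OF \<Psi>] block_index_mem(1)[OF \<Psi> j] by simp
    finally show ?thesis .
  qed
  ultimately show ?thesis
    using set_comp_block_eq[OF \<Phi>] set_comp_block_eq[OF \<Psi>] by (auto intro!: nth_equalityI)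
qed

section \<open>Monomials and packing\<close>

definition M_pattern :: "nat \<Rightarrow> nat set list \<Rightarrow> nat list \<Rightarrow> bool" where
  "M_pattern n \<Psi> w \<longleftrightarrow> length w = n \<and> (\<forall>c\<in>set w. 0 < c) \<and>
    (\<forall>j\<in>{1..n}. \<forall>l\<in>{1..n}. w!(j-1) < w!(l-1) \<longleftrightarrow> block_index \<Psi> j < block_index \<Psi> l)"

lemma M_matches_iff_M_pattern:
  assumes \<Psi>: "set_comp n \<Psi>"
  shows "M_matches n \<Psi> w \<longleftrightarrow> M_pattern n \<Psi> w"
proof
  assume m: "M_matches n \<Psi> w"
  show "M_pattern n \<Psi> w" unfolding M_pattern_def
  proof (intro conjI ballI)
    show "length w = n" "\<And>c. c \<in> set w \<Longrightarrow> 0 < c" using m by (auto simp: M_matches_def)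
    fix j l assume "j \<in> {1..n}" "l \<in> {1..n}"
    with block_index_mem[OF \<Psi>] have "block_index \<Psi> j < length \<Psi>" "j \<in> \<Psi>!block_index \<Psi> j"
      "block_index \<Psi> l < length \<Psi>" "l \<in> \<Psi>!block_index \<Psi> l" by blast+
    with m show "w!(j-1) < w!(l-1) \<longleftrightarrow> block_index \<Psi> j < block_index \<Psi> l"
      unfolding M_matches_def by (metis less_asym' linorder_neqE_nat order_less_irrefl)
  qed
next
  assume m: "M_pattern n \<Psi> w"
  have "j \<in> {1..n}" "block_index \<Psi> j = p" if "p < length \<Psi>" "j \<in> \<Psi>!p" for p j
    using that set_comp_block_eq[OF \<Psi>] by auto
  with m show "M_matches n \<Psi> w"
    unfolding M_matches_def M_pattern_def by (metis linorder_neqE_nat order_less_irrefl)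
qed

lemma Mbasis_eq: "set_comp n \<Psi> \<Longrightarrow> Mbasis n \<Psi> w = (if M_pattern n \<Psi> w then 1 else 0)"
  by (simp add: Mbasis_def M_matches_iff_M_pattern)

lemma M_pattern_unique:
  assumes "set_comp n \<Psi>" "set_comp n \<Psi>'" "M_pattern n \<Psi> w" "M_pattern n \<Psi>' w"
  shows "\<Psi> = \<Psi>'"
  using assms by (intro set_comp_eqI[of n]) (auto simp: M_pattern_def)

definition canonical_word :: "nat set list \<Rightarrow> nat \<Rightarrow> nat list" where
  "canonical_word \<Psi> n = map (\<lambda>j. Suc (block_index \<Psi> j)) [1..<n+1]"

lemma canonical_word_nth: "j \<in> {1..n} \<Longrightarrow> canonical_word \<Psi> n ! (j-1) = Suc (block_index \<Psi> j)"
  by (auto simp: canonical_word_def simp del: upt_Suc)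

lemma M_pattern_canonical_word: "M_pattern n \<Psi> (canonical_word \<Psi> n)"
  by (auto simp: M_pattern_def canonical_word_nth) (auto simp: canonical_word_def simp del: upt_Suc)

definition level_set :: "nat \<Rightarrow> nat list \<Rightarrow> nat \<Rightarrow> nat set" where
  "level_set n w v = {j\<in>{1..n}. w!(j-1) = v}"

definition pack :: "nat \<Rightarrow> nat list \<Rightarrow> nat set list" where
  "pack n w = map (level_set n w) (sorted_list_of_set (set w))"

lemma set_comp_pack:
  assumes len: "length w = n"
  shows "set_comp n (pack n w)"
  unfolding set_comp_def
proof (intro conjI ballI allI impI)
  fix B assume "B \<in> set (pack n w)"
  then obtain i where "i < n" "B = level_set n w (w!i)"
    using len by (auto simp: pack_def in_set_conv_nth)
  then have "Suc i \<in> B" by (auto simp: level_set_def)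
  then show "B \<noteq> {}" by auto
next
  fix i j assume "i < length (pack n w)" "j < length (pack n w)" "i \<noteq> j"
  then show "pack n w ! i \<inter> pack n w ! j = {}"
    by (auto simp: pack_def level_set_def nth_eq_iff_index_eq)
next
  have "j \<in> level_set n w (w!(j-1))" "w!(j-1) \<in> set w" if "j \<in> {1..n}" for j
    using that len by (auto simp: level_set_def)
  then show "\<Union>(set (pack n w)) = {1..n}"
    by (auto simp: pack_def level_set_def)
qed

lemma M_matches_pack:
  assumes len: "length w = n" and pos: "\<forall>c\<in>set w. 0 < c"
  shows "M_matches n (pack n w) w"
  unfolding M_matches_def
proof (intro conjI allI impI ballI)
  let ?vs = "sorted_list_of_set (set w)"
  have blocks: "pack n w ! p = level_set n w (?vs!p)" if "p < length (pack n w)" for p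
    using that by (simp add: pack_def)
  show "length w = n" by (fact len)
  show "0 < c" if "c \<in> set w" for c
    using pos that by blast
  show "w!(j-1) = w!(l-1)" if "p < length (pack n w)" "j \<in> pack n w ! p" "l \<in> pack n w ! p" for p j l
    using that blocks by (simp add: level_set_def)
  fix p q j l assume "p < length (pack n w)" "q < length (pack n w)" "p < q"
    "j \<in> pack n w ! p" "l \<in> pack n w ! q"
  moreover from this have "?vs!p < ?vs!q"
    using strict_sorted_list_of_set[of "set w"] by (simp add: pack_def sorted_wrt_iff_nth_less)
  ultimately show "w!(j-1) < w!(l-1)" using blocks by (simp add: level_set_def)
qed

lemma M_pattern_pack:
  assumes "length w = n" "\<forall>c\<in>set w. 0 < c"
  shows "M_pattern n (pack n w) w"
  using M_matches_pack[OF assms] M_matches_iff_M_pattern[OF set_comp_pack[OF assms(1)]] by simp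

section \<open>Proper colourings of the graph of a set composition\<close>

abbreviation F_graph :: "nat set list \<Rightarrow> nat ecdigraph" where
  "F_graph \<Phi> \<equiv> foldr solid_sum (map Q \<Phi>) empty_ecdigraph"

lemma F_graph_verts: "verts (F_graph \<Phi>) = \<Union>(set \<Phi>)"
  by (induction \<Phi>) (auto simp: solid_sum_def empty_ecdigraph_def Q_def)

lemma F_graph_dashed: "dashed (F_graph \<Phi>) = {}"
  by (induction \<Phi>) (auto simp: solid_sum_def empty_ecdigraph_def Q_def)

lemma F_graph_solid:
  "solid (F_graph \<Phi>) = {(a, b). \<exists>q<length \<Phi>. \<exists>p<q. a \<in> \<Phi>!p \<and> b \<in> \<Phi>!q}"
proof (induction \<Phi>)
  case (Cons B \<Phi>)
  have "solid (F_graph (B # \<Phi>)) = solid (F_graph \<Phi>) \<union> B \<times> \<Union>(set \<Phi>)"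
    by (simp add: solid_sum_def Q_def F_graph_verts)
  moreover have "B \<times> \<Union>(set \<Phi>) = {(a, b). a \<in> B \<and> (\<exists>q<length \<Phi>. b \<in> \<Phi>!q)}"
    by (auto simp: in_set_conv_nth) (use nth_mem in blast)
  ultimately show ?case using Cons.IH by (auto simp: Ex_less_Suc2)
qed (simp add: empty_ecdigraph_def)

lemma F_graph_double:
  "double (F_graph \<Phi>) = {(a, b). \<exists>p<length \<Phi>. (a, b) \<in> double (Q (\<Phi>!p))}"
  by (induction \<Phi>) (auto simp: solid_sum_def empty_ecdigraph_def Ex_less_Suc2)

lemma F_graph_solid_iff:
  assumes \<Phi>: "set_comp n \<Phi>"
  shows "(a, b) \<in> solid (F_graph \<Phi>) \<longleftrightarrow>
    a \<in> {1..n} \<and> b \<in> {1..n} \<and> block_index \<Phi> a < block_index \<Phi> b"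
proof
  assume "(a, b) \<in> solid (F_graph \<Phi>)"
  then obtain p q where "p < q" "q < length \<Phi>" "a \<in> \<Phi>!p" "b \<in> \<Phi>!q"
    by (auto simp: F_graph_solid)
  then show "a \<in> {1..n} \<and> b \<in> {1..n} \<and> block_index \<Phi> a < block_index \<Phi> b"
    using set_comp_block_eq[OF \<Phi>, of p] set_comp_block_eq[OF \<Phi>, of q] by auto
next
  assume "a \<in> {1..n} \<and> b \<in> {1..n} \<and> block_index \<Phi> a < block_index \<Phi> b"
  then show "(a, b) \<in> solid (F_graph \<Phi>)"
    unfolding F_graph_solid using block_index_mem[OF \<Phi>] by blast
qed

definition F_monotone :: "nat \<Rightarrow> nat set list \<Rightarrow> (nat \<Rightarrow> nat) \<Rightarrow> bool" where
  "F_monotone n \<Phi> \<kappa> \<longleftrightarrow> (\<forall>j\<in>{1..n}. \<forall>l\<in>{1..n}.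
     (block_index \<Phi> j < block_index \<Phi> l \<longrightarrow> \<kappa> j < \<kappa> l) \<and>
     (block_index \<Phi> j = block_index \<Phi> l \<and> j < l \<longrightarrow> \<kappa> j \<le> \<kappa> l))"

lemma F_graph_double_le_iff:
  fixes \<kappa> :: "nat \<Rightarrow> nat"
  assumes \<Phi>: "set_comp n \<Phi>"
  shows "(\<forall>(a, b)\<in>double (F_graph \<Phi>). \<kappa> a \<le> \<kappa> b) \<longleftrightarrow>
    (\<forall>j\<in>{1..n}. \<forall>l\<in>{1..n}. block_index \<Phi> j = block_index \<Phi> l \<and> j < l \<longrightarrow> \<kappa> j \<le> \<kappa> l)"
proof -
  have double: "(a, b) \<in> double (F_graph \<Phi>) \<longleftrightarrow> (\<exists>p<length \<Phi>. a \<in> \<Phi>!p \<and> b \<in> \<Phi>!p \<and> a < b \<and>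
      \<not> (\<exists>c\<in>\<Phi>!p. a < c \<and> c < b))" for a b
    by (simp add: F_graph_double Q_def)
  have same_block: "(\<exists>p<length \<Phi>. a \<in> \<Phi>!p \<and> b \<in> \<Phi>!p) \<longleftrightarrow>
      a \<in> {1..n} \<and> b \<in> {1..n} \<and> block_index \<Phi> a = block_index \<Phi> b" for a b
    using block_index_mem[OF \<Phi>] set_comp_block_eq[OF \<Phi>] by auto
  show ?thesis
  proof
    assume double_le: "\<forall>(a, b)\<in>double (F_graph \<Phi>). \<kappa> a \<le> \<kappa> b"
    have "mono_on (\<Phi>!p) \<kappa>" if "p < length \<Phi>" for p
    proof (rule mono_on_if_covers)
      fix a b assume "a \<in> \<Phi>!p" "b \<in> \<Phi>!p" "a < b" "\<not> (\<exists>c\<in>\<Phi>!p. a < c \<and> c < b)"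
      with that have "(a, b) \<in> double (F_graph \<Phi>)" by (auto simp: double)
      with double_le show "\<kappa> a \<le> \<kappa> b" by blast
    qed
    then show "\<forall>j\<in>{1..n}. \<forall>l\<in>{1..n}. block_index \<Phi> j = block_index \<Phi> l \<and> j < l \<longrightarrow> \<kappa> j \<le> \<kappa> l"
      using block_index_mem[OF \<Phi>] by (metis less_imp_le mono_onD)
  next
    assume same_block_le:
      "\<forall>j\<in>{1..n}. \<forall>l\<in>{1..n}. block_index \<Phi> j = block_index \<Phi> l \<and> j < l \<longrightarrow> \<kappa> j \<le> \<kappa> l"
    show "\<forall>(a, b)\<in>double (F_graph \<Phi>). \<kappa> a \<le> \<kappa> b"
    proof clarify
      fix a b assume "(a, b) \<in> double (F_graph \<Phi>)"
      then have "a < b" "\<exists>p<length \<Phi>. a \<in> \<Phi>!p \<and> b \<in> \<Phi>!p" by (auto simp: double)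
      with same_block_le show "\<kappa> a \<le> \<kappa> b" unfolding same_block by blast
    qed
  qed
qed

lemma proper_colouring_F_graph_iff:
  assumes \<Phi>: "set_comp n \<Phi>"
  shows "proper_colouring (F_graph \<Phi>) \<kappa> \<longleftrightarrow> (\<forall>v\<in>{1..n}. 0 < \<kappa> v) \<and> F_monotone n \<Phi> \<kappa>"
proof -
  have "verts (F_graph \<Phi>) = {1..n}"
    using \<Phi> by (simp add: F_graph_verts set_comp_def)
  moreover have "(\<forall>(a, b)\<in>solid (F_graph \<Phi>). \<kappa> a < \<kappa> b) \<longleftrightarrow>
      (\<forall>j\<in>{1..n}. \<forall>l\<in>{1..n}. block_index \<Phi> j < block_index \<Phi> l \<longrightarrow> \<kappa> j < \<kappa> l)"
    using F_graph_solid_iff[OF \<Phi>] by fast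
  ultimately show ?thesis
    unfolding proper_colouring_def F_monotone_def F_graph_dashed F_graph_double_le_iff[OF \<Phi>] by blast
qed

lemma Y_identity_labelling:
  assumes verts: "verts G = {1..n}"
  shows "Y G id w = (if length w = n \<and> proper_colouring G (\<lambda>j\<in>{1..n}. w!(j-1)) then 1 else 0)"
proof -
  let ?\<kappa>\<^sub>w = "\<lambda>j\<in>{1..n}. w!(j-1)"
  define reads where "reads \<kappa> \<longleftrightarrow> w = map (\<lambda>i. \<kappa> (inv_into {1..n} id i)) [1..<n+1]" for \<kappa>
  have reads_iff: "reads \<kappa> \<longleftrightarrow> length w = n \<and> \<kappa> = ?\<kappa>\<^sub>w" if \<kappa>: "\<kappa> \<in> extensional {1..n}" for \<kappa>
  proof -
    have "map (\<lambda>i. \<kappa> (inv_into {1..n} id i)) [1..<n+1] = map \<kappa> [1..<n+1]"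
      using inv_into_f_f[OF inj_on_id, of _ "{1..n}"] by (intro map_cong) (auto simp del: upt_Suc)
    moreover have "w = map \<kappa> [1..<n+1] \<longleftrightarrow> length w = n \<and> (\<forall>i<n. \<kappa> (Suc i) = w!i)"
      by (metis add_diff_cancel_right' length_map length_upt map_upt_eqI nth_map_upt plus_1_eq_Suc)
    moreover have "\<kappa> = ?\<kappa>\<^sub>w \<longleftrightarrow> (\<forall>j\<in>{1..n}. \<kappa> j = w!(j-1))"
    proof
      assume "\<forall>j\<in>{1..n}. \<kappa> j = w!(j-1)"
      then show "\<kappa> = ?\<kappa>\<^sub>w" by (intro extensionalityI[OF \<kappa> restrict_extensional]) simp
    qed simp
    moreover have "(\<forall>j\<in>{1..n}. \<kappa> j = w!(j-1)) \<longleftrightarrow> (\<forall>i<n. \<kappa> (Suc i) = w!i)"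
      using ball_atLeastAtMost_Suc[of n "\<lambda>j. \<kappa> j = w!(j-1)"] by simp
    ultimately show ?thesis
      unfolding reads_def by (simp only:)
  qed
  have "Y G id w = of_nat (card {\<kappa>. \<kappa> \<in> extensional {1..n} \<and> proper_colouring G \<kappa> \<and> reads \<kappa>})"
    by (simp add: Y_def verts reads_def)
  also have "{\<kappa>. \<kappa> \<in> extensional {1..n} \<and> proper_colouring G \<kappa> \<and> reads \<kappa>}
      = (if length w = n \<and> proper_colouring G ?\<kappa>\<^sub>w then {?\<kappa>\<^sub>w} else {})"
    using reads_iff by auto
  also have "of_nat (card \<dots>) = (if length w = n \<and> proper_colouring G ?\<kappa>\<^sub>w then 1 else 0)"
    by simp
  finally show ?thesis .
qed

definition F_pattern :: "nat \<Rightarrow> nat set list \<Rightarrow> nat list \<Rightarrow> bool" where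
  "F_pattern n \<Phi> w \<longleftrightarrow> length w = n \<and> (\<forall>c\<in>set w. 0 < c) \<and> F_monotone n \<Phi> (\<lambda>j. w!(j-1))"

lemma Fbasis_eq:
  assumes \<Phi>: "set_comp n \<Phi>"
  shows "Fbasis \<Phi> w = (if F_pattern n \<Phi> w then 1 else 0)"
proof -
  let ?\<kappa>\<^sub>w = "\<lambda>j\<in>{1..n}. w!(j-1)"
  have "verts (F_graph \<Phi>) = {1..n}"
    using \<Phi> by (simp add: F_graph_verts set_comp_def)
  then have "Fbasis \<Phi> w = (if length w = n \<and> proper_colouring (F_graph \<Phi>) ?\<kappa>\<^sub>w then 1 else 0)"
    unfolding Fbasis_def by (rule Y_identity_labelling)
  moreover have "proper_colouring (F_graph \<Phi>) ?\<kappa>\<^sub>w \<longleftrightarrow>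
      (\<forall>c\<in>set w. 0 < c) \<and> F_monotone n \<Phi> (\<lambda>j. w!(j-1))" if "length w = n"
  proof -
    have "F_monotone n \<Phi> ?\<kappa>\<^sub>w \<longleftrightarrow> F_monotone n \<Phi> (\<lambda>j. w!(j-1))"
      by (simp add: F_monotone_def)
    moreover have "(\<forall>j\<in>{1..n}. 0 < ?\<kappa>\<^sub>w j) \<longleftrightarrow> (\<forall>c\<in>set w. 0 < c)"
      using that ball_atLeastAtMost_Suc[of n "\<lambda>j. 0 < ?\<kappa>\<^sub>w j"] by (simp add: all_set_conv_all_nth)
    ultimately show ?thesis
      by (simp only: proper_colouring_F_graph_iff[OF \<Phi>])
  qed
  ultimately show ?thesis
    unfolding F_pattern_def by (cases "length w = n") simp_all
qed

section \<open>Reforms in terms of block indices\<close>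

text \<open>\<open>sc_word \<Phi>\<close> lists \<open>{1..n}\<close> in increasing order of this key.\<close>

definition word_key :: "nat set list \<Rightarrow> nat \<Rightarrow> nat \<times> nat" where
  "word_key \<Phi> j = (block_index \<Phi> j, j)"

lemma set_sc_word: "set_comp n \<Phi> \<Longrightarrow> set (sc_word \<Phi>) = {1..n}"
  unfolding sc_word_def using set_comp_finite_blocks by (auto simp: set_comp_def)

lemma sorted_sc_word:
  assumes \<Phi>: "set_comp n \<Phi>"
  shows "sorted_wrt (<) (map (word_key \<Phi>) (sc_word \<Phi>))"
  unfolding sorted_wrt_map sc_word_def
proof (rule sorted_wrt_concat)
  have fin: "p < length \<Phi> \<Longrightarrow> finite (\<Phi>!p)" for p
    using set_comp_finite_blocks[OF \<Phi>] by simp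
  show "\<forall>xs\<in>set (map sorted_list_of_set \<Phi>). sorted_wrt (\<lambda>x y. word_key \<Phi> x < word_key \<Phi> y) xs"
  proof
    fix xs assume "xs \<in> set (map sorted_list_of_set \<Phi>)"
    then obtain p where p: "p < length \<Phi>" "xs = sorted_list_of_set (\<Phi>!p)"
      by (auto simp: in_set_conv_nth)
    have "sorted_wrt (<) xs" using p by simp
    then show "sorted_wrt (\<lambda>x y. word_key \<Phi> x < word_key \<Phi> y) xs"
      by (rule sorted_wrt_mono_rel[rotated])
         (use p fin block_index_eqI[OF \<Phi> p(1)] in \<open>auto simp: word_key_def\<close>)
  qed
  show "\<forall>i j. i < j \<longrightarrow> j < length (map sorted_list_of_set \<Phi>) \<longrightarrow>
      (\<forall>a\<in>set (map sorted_list_of_set \<Phi> ! i). \<forall>b\<in>set (map sorted_list_of_set \<Phi> ! j).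
         word_key \<Phi> a < word_key \<Phi> b)"
  proof (intro allI impI ballI)
    fix i j a b assume "i < j" "j < length (map sorted_list_of_set \<Phi>)"
      "a \<in> set (map sorted_list_of_set \<Phi> ! i)" "b \<in> set (map sorted_list_of_set \<Phi> ! j)"
    then have "i < length \<Phi>" "a \<in> \<Phi>!i" "j < length \<Phi>" "b \<in> \<Phi>!j" using fin by auto
    with \<open>i < j\<close> show "word_key \<Phi> a < word_key \<Phi> b"
      using block_index_eqI[OF \<Phi> \<open>i < length \<Phi>\<close> \<open>a \<in> \<Phi>!i\<close>]
        block_index_eqI[OF \<Phi> \<open>j < length \<Phi>\<close> \<open>b \<in> \<Phi>!j\<close>]
      by (simp add: word_key_def)
  qed
qed

lemma distinct_sc_word: "set_comp n \<Phi> \<Longrightarrow> distinct (sc_word \<Phi>)"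
  using sorted_sc_word strict_sorted_iff distinct_map by blast

lemma sc_word_eq_iff:
  assumes \<Phi>: "set_comp n \<Phi>" and \<Psi>: "set_comp n \<Psi>"
  shows "sc_word \<Psi> = sc_word \<Phi> \<longleftrightarrow>
    (\<forall>j\<in>{1..n}. \<forall>l\<in>{1..n}. word_key \<Phi> j < word_key \<Phi> l \<longrightarrow> word_key \<Psi> j < word_key \<Psi> l)"
proof
  assume eq: "sc_word \<Psi> = sc_word \<Phi>"
  show "\<forall>j\<in>{1..n}. \<forall>l\<in>{1..n}. word_key \<Phi> j < word_key \<Phi> l \<longrightarrow> word_key \<Psi> j < word_key \<Psi> l"
    using strict_sorted_map_less_transfer[OF sorted_sc_word[OF \<Phi>] sorted_sc_word[OF \<Psi>, unfolded eq]]
    unfolding set_sc_word[OF \<Phi>] by blast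
next
  assume incl: "\<forall>j\<in>{1..n}. \<forall>l\<in>{1..n}. word_key \<Phi> j < word_key \<Phi> l \<longrightarrow> word_key \<Psi> j < word_key \<Psi> l"
  have "sorted_wrt (<) (map (word_key \<Psi>) (sc_word \<Phi>))"
    using sorted_sc_word[OF \<Phi>] unfolding sorted_wrt_map
    by (rule sorted_wrt_mono_rel[rotated]) (use incl set_sc_word[OF \<Phi>] in blast)
  then have "map (word_key \<Psi>) (sc_word \<Phi>) = map (word_key \<Psi>) (sc_word \<Psi>)"
    using sorted_sc_word[OF \<Psi>] set_sc_word[OF \<Phi>] set_sc_word[OF \<Psi>]
    by (intro strict_sorted_equal) auto
  moreover have "inj (word_key \<Psi>)" by (rule injI) (simp add: word_key_def)
  ultimately show "sc_word \<Psi> = sc_word \<Phi>"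
    by (metis inj_map_eq_map)
qed

lemma length_sc_word_take:
  assumes "\<forall>B\<in>set \<Phi>. finite B" "i \<le> length \<Phi>"
  shows "length (sc_word (take i \<Phi>)) = (\<Sum>p<i. card (\<Phi>!p))"
  using assms(2)
proof (induction i)
  case (Suc i)
  with assms(1) show ?case
    by (simp add: take_Suc_conv_app_nth sc_word_def length_concat)
qed (simp add: sc_word_def)

lemma take_sc_word: "take (length (sc_word (take i \<Phi>))) (sc_word \<Phi>) = sc_word (take i \<Phi>)"
proof -
  have "sc_word \<Phi> = sc_word (take i \<Phi>) @ sc_word (drop i \<Phi>)"
    unfolding sc_word_def by (metis append_take_drop_id concat_append map_append)
  then show ?thesis by (metis append_eq_conv_conj)
qed

definition blocks_below :: "nat \<Rightarrow> nat set list \<Rightarrow> nat \<Rightarrow> nat set" where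
  "blocks_below n \<Phi> i = {j\<in>{1..n}. block_index \<Phi> j < i}"

lemma set_sc_word_take:
  assumes \<Phi>: "set_comp n \<Phi>"
  shows "set (sc_word (take i \<Phi>)) = blocks_below n \<Phi> i"
proof -
  have "finite B" if "B \<in> set (take i \<Phi>)" for B
    using set_comp_finite_blocks[OF \<Phi> in_set_takeD[OF that]] .
  then have "set (sc_word (take i \<Phi>)) = (\<Union>B\<in>set (take i \<Phi>). B)"
    unfolding sc_word_def set_concat set_map image_image by (intro SUP_cong) simp_all
  also have "\<dots> = blocks_below n \<Phi> i"
    unfolding blocks_below_def
  proof (intro set_eqI iffI)
    fix j assume "j \<in> (\<Union>B\<in>set (take i \<Phi>). B)"
    then obtain p where "p < length \<Phi>" "p < i" "j \<in> \<Phi>!p" by (auto simp: in_set_conv_nth)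
    then show "j \<in> {j\<in>{1..n}. block_index \<Phi> j < i}" using set_comp_block_eq[OF \<Phi>] by auto
  next
    fix j assume j: "j \<in> {j\<in>{1..n}. block_index \<Phi> j < i}"
    then have "block_index \<Phi> j < length (take i \<Phi>)" using block_index_mem(1)[OF \<Phi>] by simp
    then have "take i \<Phi> ! block_index \<Phi> j \<in> set (take i \<Phi>)" by (rule nth_mem)
    with j have "\<Phi>!block_index \<Phi> j \<in> set (take i \<Phi>)" by simp
    with j show "j \<in> (\<Union>B\<in>set (take i \<Phi>). B)" using block_index_mem(2)[OF \<Phi>] by blast
  qed
  finally show ?thesis .
qed

lemma sc_bars_eq:
  assumes \<Phi>: "set_comp n \<Phi>"
  shows "sc_bars \<Phi> = {length (sc_word (take i \<Phi>)) | i. i \<le> length \<Phi>}"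
proof -
  have "(\<Sum>p<i. card (\<Phi>!p)) = length (sc_word (take i \<Phi>))" if "i \<le> length \<Phi>" for i
    using length_sc_word_take set_comp_finite_blocks[OF \<Phi>] that by simp
  then show ?thesis
    unfolding sc_bars_def by (metis (lifting))
qed

lemma sc_word_prefix_at_bar:
  assumes \<Phi>: "set_comp n \<Phi>"
  shows "length (sc_word (take i \<Phi>)) \<le> length (sc_word \<Phi>)"
    and "set (take (length (sc_word (take i \<Phi>))) (sc_word \<Phi>)) = blocks_below n \<Phi> i"
proof -
  have "length (take (length (sc_word (take i \<Phi>))) (sc_word \<Phi>)) = length (sc_word (take i \<Phi>))"
    by (simp only: take_sc_word)
  then show "length (sc_word (take i \<Phi>)) \<le> length (sc_word \<Phi>)" by simp
  show "set (take (length (sc_word (take i \<Phi>))) (sc_word \<Phi>)) = blocks_below n \<Phi> i"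
    by (simp add: take_sc_word set_sc_word_take[OF \<Phi>])
qed

text \<open>Since the common word is distinct, a bar is determined by the set of letters before it.\<close>

lemma sc_bars_subset_iff:
  assumes \<Phi>: "set_comp n \<Phi>" and \<Psi>: "set_comp n \<Psi>" and same_word: "sc_word \<Psi> = sc_word \<Phi>"
  shows "sc_bars \<Phi> \<subseteq> sc_bars \<Psi> \<longleftrightarrow>
    (\<forall>i\<le>length \<Phi>. \<exists>i'\<le>length \<Psi>. blocks_below n \<Phi> i = blocks_below n \<Psi> i')"
proof -
  let ?u = "sc_word \<Phi>" and ?bar = "\<lambda>X i. length (sc_word (take i X))"
  note prefix_\<Phi> = sc_word_prefix_at_bar[OF \<Phi>]
  note prefix_\<Psi> = sc_word_prefix_at_bar[OF \<Psi>, unfolded same_word]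
  have same_bar: "?bar \<Phi> i = ?bar \<Psi> i' \<longleftrightarrow> blocks_below n \<Phi> i = blocks_below n \<Psi> i'" for i i'
    using set_take_eq_imp_eq[OF distinct_sc_word[OF \<Phi>] prefix_\<Phi>(1) prefix_\<Psi>(1)]
    by (metis prefix_\<Phi>(2) prefix_\<Psi>(2))
  show ?thesis
    unfolding sc_bars_eq[OF \<Phi>] sc_bars_eq[OF \<Psi>] same_bar[symmetric] by blast
qed

lemma block_order_if_blocks_below_match:
  assumes \<Phi>: "set_comp n \<Phi>"
    and match: "\<forall>i\<le>length \<Phi>. \<exists>i'\<le>length \<Psi>. blocks_below n \<Phi> i = blocks_below n \<Psi> i'"
  shows "\<forall>j\<in>{1..n}. \<forall>l\<in>{1..n}. block_index \<Phi> j < block_index \<Phi> l \<longrightarrow> block_index \<Psi> j < block_index \<Psi> l"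
proof (intro ballI impI)
  fix j l assume j: "j \<in> {1..n}" and l: "l \<in> {1..n}" and less: "block_index \<Phi> j < block_index \<Phi> l"
  let ?i = "Suc (block_index \<Phi> j)"
  have "?i \<le> length \<Phi>" using block_index_mem(1)[OF \<Phi> j] by simp
  with match obtain i' where eq: "blocks_below n \<Phi> ?i = blocks_below n \<Psi> i'"
    by blast
  have "j \<in> blocks_below n \<Phi> ?i" "l \<notin> blocks_below n \<Phi> ?i"
    using j less by (simp_all add: blocks_below_def)
  then have "j \<in> blocks_below n \<Psi> i'" "l \<notin> blocks_below n \<Psi> i'"
    unfolding eq by simp_all
  with l show "block_index \<Psi> j < block_index \<Psi> l"
    by (simp add: blocks_below_def)
qed

lemma blocks_below_match_if_block_order:
  assumes \<Psi>: "set_comp n \<Psi>"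
    and order: "\<forall>j\<in>{1..n}. \<forall>l\<in>{1..n}. block_index \<Phi> j < block_index \<Phi> l \<longrightarrow> block_index \<Psi> j < block_index \<Psi> l"
  shows "\<forall>i\<le>length \<Phi>. \<exists>i'\<le>length \<Psi>. blocks_below n \<Phi> i = blocks_below n \<Psi> i'"
proof (intro allI impI)
  fix i
  define bounds where "bounds = insert (length \<Psi>) (block_index \<Psi> ` {l\<in>{1..n}. i \<le> block_index \<Phi> l})"
  define i' where "i' = Min bounds"
  have fin: "finite bounds" "bounds \<noteq> {}" by (simp_all add: bounds_def)
  have "blocks_below n \<Phi> i = blocks_below n \<Psi> i'"
  proof (intro set_eqI iffI)
    fix j assume "j \<in> blocks_below n \<Phi> i"
    then have j: "j \<in> {1..n}" "block_index \<Phi> j < i" by (simp_all add: blocks_below_def)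
    have "block_index \<Psi> j < b" if "b \<in> bounds" for b
    proof -
      from that consider "b = length \<Psi>" | l where "l \<in> {1..n}" "i \<le> block_index \<Phi> l" "b = block_index \<Psi> l"
        unfolding bounds_def by blast
      then show ?thesis
      proof cases
        case 1 then show ?thesis using block_index_mem(1)[OF \<Psi> j(1)] by simp
      next
        case 2 then show ?thesis using order j by simp
      qed
    qed
    with fin j(1) show "j \<in> blocks_below n \<Psi> i'"
      by (simp add: blocks_below_def i'_def)
  next
    fix j assume "j \<in> blocks_below n \<Psi> i'"
    then have j: "j \<in> {1..n}" "block_index \<Psi> j < i'" by (simp_all add: blocks_below_def)
    have "block_index \<Phi> j < i"
    proof (rule ccontr)
      assume "\<not> block_index \<Phi> j < i"
      with j(1) have "block_index \<Psi> j \<in> bounds" by (simp add: bounds_def)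
      with fin have "i' \<le> block_index \<Psi> j" by (simp add: i'_def)
      with j(2) show False by simp
    qed
    with j(1) show "j \<in> blocks_below n \<Phi> i" by (simp add: blocks_below_def)
  qed
  moreover have "i' \<le> length \<Psi>" using fin by (simp add: i'_def bounds_def)
  ultimately show "\<exists>i'\<le>length \<Psi>. blocks_below n \<Phi> i = blocks_below n \<Psi> i'" by blast
qed

definition reforms_by_index :: "nat \<Rightarrow> nat set list \<Rightarrow> nat set list \<Rightarrow> bool" where
  "reforms_by_index n \<Psi> \<Phi> \<longleftrightarrow> (\<forall>j\<in>{1..n}. \<forall>l\<in>{1..n}.
     (block_index \<Phi> j < block_index \<Phi> l \<longrightarrow> block_index \<Psi> j < block_index \<Psi> l) \<and>
     (block_index \<Phi> j = block_index \<Phi> l \<and> j < l \<longrightarrow> block_index \<Psi> j \<le> block_index \<Psi> l))"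

lemma word_key_less_iff: "word_key \<Phi> j < word_key \<Phi> l \<longleftrightarrow>
    block_index \<Phi> j < block_index \<Phi> l \<or> (block_index \<Phi> j = block_index \<Phi> l \<and> j < l)"
  by (auto simp: word_key_def less_prod_def)

lemma reforms_iff_reforms_by_index:
  assumes \<Phi>: "set_comp n \<Phi>" and \<Psi>: "set_comp n \<Psi>"
  shows "reforms \<Psi> \<Phi> \<longleftrightarrow> reforms_by_index n \<Psi> \<Phi>"
proof -
  let ?keys = "\<forall>j\<in>{1..n}. \<forall>l\<in>{1..n}. word_key \<Phi> j < word_key \<Phi> l \<longrightarrow> word_key \<Psi> j < word_key \<Psi> l"
  let ?blocks = "\<forall>j\<in>{1..n}. \<forall>l\<in>{1..n}.
    block_index \<Phi> j < block_index \<Phi> l \<longrightarrow> block_index \<Psi> j < block_index \<Psi> l"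
  have "reforms \<Psi> \<Phi> \<longleftrightarrow> ?keys \<and> ?blocks"
  proof (cases "sc_word \<Psi> = sc_word \<Phi>")
    case True
    have "(\<forall>i\<le>length \<Phi>. \<exists>i'\<le>length \<Psi>. blocks_below n \<Phi> i = blocks_below n \<Psi> i') \<longleftrightarrow> ?blocks"
      using block_order_if_blocks_below_match[OF \<Phi>] blocks_below_match_if_block_order[OF \<Psi>] by blast
    with True show ?thesis
      unfolding reforms_def sc_bars_subset_iff[OF \<Phi> \<Psi> True]
      using sc_word_eq_iff[OF \<Phi> \<Psi>] by simp
  next
    case False
    then have "\<not> ?keys" using sc_word_eq_iff[OF \<Phi> \<Psi>] by simp
    with False show ?thesis by (simp add: reforms_def)
  qed
  also have "?keys \<and> ?blocks \<longleftrightarrow> reforms_by_index n \<Psi> \<Phi>"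
    unfolding reforms_by_index_def word_key_less_iff
    by (intro iffI conjI ballI impI) (fastforce | force)+
  finally show ?thesis .
qed

lemma reforms_refl: "reforms \<Phi> \<Phi>"
  by (simp add: reforms_def)

section \<open>Expansion and triangularity\<close>

lemma F_pattern_iff_reforms:
  assumes \<Phi>: "set_comp n \<Phi>" and \<Psi>: "set_comp n \<Psi>" and M: "M_pattern n \<Psi> w"
  shows "F_pattern n \<Phi> w \<longleftrightarrow> reforms \<Psi> \<Phi>"
proof -
  have less: "w!(j-1) < w!(l-1) \<longleftrightarrow> block_index \<Psi> j < block_index \<Psi> l"
    if "j \<in> {1..n}" "l \<in> {1..n}" for j l
    using M that by (simp add: M_pattern_def)
  have "w!(j-1) \<le> w!(l-1) \<longleftrightarrow> block_index \<Psi> j \<le> block_index \<Psi> l"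
    if "j \<in> {1..n}" "l \<in> {1..n}" for j l
    using less[OF that(2,1)] by (simp add: not_less[symmetric])
  with less M have "F_pattern n \<Phi> w \<longleftrightarrow> reforms_by_index n \<Psi> \<Phi>"
    by (simp add: F_pattern_def F_monotone_def reforms_by_index_def M_pattern_def)
  then show ?thesis using reforms_iff_reforms_by_index[OF \<Phi> \<Psi>] by simp
qed

lemma sum_Mbasis_eq:
  assumes fin: "finite S" and S: "\<And>\<Psi>. \<Psi> \<in> S \<Longrightarrow> set_comp n \<Psi>"
  shows "(\<Sum>\<Psi>\<in>S. Mbasis n \<Psi> w) = (if \<exists>\<Psi>\<in>S. M_pattern n \<Psi> w then 1 else 0)"
proof (cases "\<exists>\<Psi>\<in>S. M_pattern n \<Psi> w")
  case True
  then obtain \<Psi>\<^sub>0 where \<Psi>\<^sub>0: "\<Psi>\<^sub>0 \<in> S" "M_pattern n \<Psi>\<^sub>0 w" by blast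
  have "M_pattern n \<Psi> w \<longleftrightarrow> \<Psi> = \<Psi>\<^sub>0" if "\<Psi> \<in> S" for \<Psi>
    using M_pattern_unique[OF S[OF that] S[OF \<Psi>\<^sub>0(1)] _ \<Psi>\<^sub>0(2)] \<Psi>\<^sub>0(2) by blast
  then have "Mbasis n \<Psi> w = (if \<Psi> = \<Psi>\<^sub>0 then 1 else 0)" if "\<Psi> \<in> S" for \<Psi>
    using that by (simp add: Mbasis_eq[OF S[OF that]])
  then have "(\<Sum>\<Psi>\<in>S. Mbasis n \<Psi> w) = (\<Sum>\<Psi>\<in>S. if \<Psi> = \<Psi>\<^sub>0 then 1 else 0)"
    by (rule sum.cong[OF refl])
  also have "\<dots> = 1" using fin \<Psi>\<^sub>0(1) by simp
  finally show ?thesis using True by simp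
next
  case False
  then have "Mbasis n \<Psi> w = 0" if "\<Psi> \<in> S" for \<Psi>
    using that by (simp add: Mbasis_eq[OF S[OF that]])
  then have "(\<Sum>\<Psi>\<in>S. Mbasis n \<Psi> w) = 0" by (intro sum.neutral) blast
  with False show ?thesis by simp
qed

lemma Fbasis_expansion:
  assumes \<Phi>: "set_comp n \<Phi>"
  shows "Fbasis \<Phi> w = (\<Sum>\<Psi> | set_comp n \<Psi> \<and> reforms \<Psi> \<Phi>. Mbasis n \<Psi> w)"
proof -
  have "finite {\<Psi>. set_comp n \<Psi> \<and> reforms \<Psi> \<Phi>}"
    using finite_set_comps by (rule finite_subset[rotated]) blast
  then have "(\<Sum>\<Psi> | set_comp n \<Psi> \<and> reforms \<Psi> \<Phi>. Mbasis n \<Psi> w) =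
      (if \<exists>\<Psi>. set_comp n \<Psi> \<and> reforms \<Psi> \<Phi> \<and> M_pattern n \<Psi> w then 1 else 0)"
    by (subst sum_Mbasis_eq) auto
  also have "(\<exists>\<Psi>. set_comp n \<Psi> \<and> reforms \<Psi> \<Phi> \<and> M_pattern n \<Psi> w) \<longleftrightarrow> F_pattern n \<Phi> w"
  proof
    assume "\<exists>\<Psi>. set_comp n \<Psi> \<and> reforms \<Psi> \<Phi> \<and> M_pattern n \<Psi> w"
    then show "F_pattern n \<Phi> w" using F_pattern_iff_reforms[OF \<Phi>] by blast
  next
    assume F: "F_pattern n \<Phi> w"
    then have "length w = n" "\<forall>c\<in>set w. 0 < c" by (simp_all add: F_pattern_def)
    with F show "\<exists>\<Psi>. set_comp n \<Psi> \<and> reforms \<Psi> \<Phi> \<and> M_pattern n \<Psi> w"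
      using set_comp_pack M_pattern_pack F_pattern_iff_reforms[OF \<Phi>] by blast
  qed
  also have "(if F_pattern n \<Phi> w then 1 else 0) = Fbasis \<Phi> w"
    by (simp add: Fbasis_eq[OF \<Phi>])
  finally show ?thesis by (rule sym)
qed

lemma Fbasis_canonical_word:
  assumes \<Psi>: "set_comp m \<Psi>" and \<Phi>: "set_comp n \<Phi>"
  shows "Fbasis \<Psi> (canonical_word \<Phi> n) = (if m = n \<and> reforms \<Phi> \<Psi> then 1 else 0)"
proof (cases "m = n")
  case True
  with assms show ?thesis
    using F_pattern_iff_reforms[OF \<Psi> _ M_pattern_canonical_word] by (simp add: Fbasis_eq)
next
  case False
  then have "\<not> F_pattern m \<Psi> (canonical_word \<Phi> n)"
    by (simp add: F_pattern_def canonical_word_def)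
  with False show ?thesis by (simp add: Fbasis_eq[OF \<Psi>])
qed

definition separated_pairs :: "nat \<Rightarrow> nat set list \<Rightarrow> (nat \<times> nat) set" where
  "separated_pairs n \<Phi> = {(j, l) \<in> {1..n} \<times> {1..n}. block_index \<Phi> j < block_index \<Phi> l}"

lemma card_separated_pairs_le: "card (separated_pairs n \<Phi>) \<le> n * n"
proof -
  have "card (separated_pairs n \<Phi>) \<le> card ({1..n} \<times> {1..n})"
    by (rule card_mono) (auto simp: separated_pairs_def)
  then show ?thesis by simp
qed

text \<open>This is the order in which \<open>Fbasis\<close> is unitriangular with respect to \<open>Mbasis\<close>.\<close>

lemma card_separated_pairs_less:
  assumes \<Phi>: "set_comp n \<Phi>" and \<Psi>: "set_comp n \<Psi>" and "reforms \<Psi> \<Phi>" "\<Psi> \<noteq> \<Phi>"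
  shows "card (separated_pairs n \<Phi>) < card (separated_pairs n \<Psi>)"
proof (rule psubset_card_mono)
  show "finite (separated_pairs n \<Psi>)"
    by (rule finite_subset[of _ "{1..n} \<times> {1..n}"]) (auto simp: separated_pairs_def)
  have separated_iff: "(j, l) \<in> separated_pairs n X \<longleftrightarrow> block_index X j < block_index X l"
    if "j \<in> {1..n}" "l \<in> {1..n}" for X j l
    using that by (simp add: separated_pairs_def)
  have "reforms_by_index n \<Psi> \<Phi>"
    using reforms_iff_reforms_by_index[OF \<Phi> \<Psi>] \<open>reforms \<Psi> \<Phi>\<close> by simp
  then have "separated_pairs n \<Phi> \<subseteq> separated_pairs n \<Psi>"
    by (auto simp: separated_pairs_def reforms_by_index_def)
  moreover have "separated_pairs n \<Phi> \<noteq> separated_pairs n \<Psi>"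
  proof
    assume same: "separated_pairs n \<Phi> = separated_pairs n \<Psi>"
    have "\<Phi> = \<Psi>"
    proof (rule set_comp_eqI[OF \<Phi> \<Psi>])
      fix j l assume "j \<in> {1..n}" "l \<in> {1..n}"
      then show "block_index \<Phi> j < block_index \<Phi> l \<longleftrightarrow> block_index \<Psi> j < block_index \<Psi> l"
        using separated_iff[of j l \<Phi>] separated_iff[of j l \<Psi>] same by simp
    qed
    with \<open>\<Psi> \<noteq> \<Phi>\<close> show False by simp
  qed
  ultimately show "separated_pairs n \<Phi> \<subset> separated_pairs n \<Psi>" by blast
qed

lemma independent_Fbasis: "pointwise.independent (Fbasis ` all_set_comps :: 'a :: field ncseries set)"
proof -
  let ?I = "{(n, \<Phi>). set_comp n \<Phi>}"
  have "(Fbasis ` all_set_comps :: 'a ncseries set) = (Fbasis \<circ> snd) ` ?I"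
    by (force simp: all_set_comps_def)
  moreover have "pointwise.independent ((Fbasis \<circ> snd) ` ?I :: 'a ncseries set)"
  proof (rule pointwise_independent_if_triangular[where p = "\<lambda>(n, \<Phi>). canonical_word \<Phi> n"
        and \<mu> = "\<lambda>(n, \<Phi>). card (separated_pairs n \<Phi>)"])
    fix i assume "i \<in> ?I"
    then show "(Fbasis \<circ> snd) i ((\<lambda>(n, \<Phi>). canonical_word \<Phi> n) i) \<noteq> (0 :: 'a)"
      by (auto simp: Fbasis_canonical_word reforms_refl)
  next
    fix i j assume "i \<in> ?I" "j \<in> ?I" and "(Fbasis \<circ> snd) j \<noteq> ((Fbasis \<circ> snd) i :: 'a ncseries)"
      and "(Fbasis \<circ> snd) j ((\<lambda>(n, \<Phi>). canonical_word \<Phi> n) i) \<noteq> (0 :: 'a)"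
    then show "(\<lambda>(n, \<Phi>). card (separated_pairs n \<Phi>)) j < (\<lambda>(n, \<Phi>). card (separated_pairs n \<Phi>)) i"
      by (auto simp: Fbasis_canonical_word split: if_splits intro: card_separated_pairs_less)
  qed
  ultimately show ?thesis by simp
qed

lemma inj_on_Fbasis: "inj_on (Fbasis :: nat set list \<Rightarrow> 'a :: field ncseries) all_set_comps"
proof (rule inj_onI)
  fix \<Phi> \<Psi> assume "\<Phi> \<in> all_set_comps" "\<Psi> \<in> all_set_comps" and eq: "(Fbasis \<Phi> :: 'a ncseries) = Fbasis \<Psi>"
  then obtain n m where \<Phi>: "set_comp n \<Phi>" and \<Psi>: "set_comp m \<Psi>" by (auto simp: all_set_comps_def)
  have "(Fbasis \<Psi> :: 'a ncseries) (canonical_word \<Phi> n) = 1"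
    unfolding eq[symmetric] using Fbasis_canonical_word[OF \<Phi> \<Phi>] by (simp add: reforms_refl)
  moreover have "(Fbasis \<Phi> :: 'a ncseries) (canonical_word \<Psi> m) = 1"
    unfolding eq using Fbasis_canonical_word[OF \<Psi> \<Psi>] by (simp add: reforms_refl)
  ultimately have "m = n" "reforms \<Phi> \<Psi>" "reforms \<Psi> \<Phi>"
    unfolding Fbasis_canonical_word[OF \<Psi> \<Phi>] Fbasis_canonical_word[OF \<Phi> \<Psi>]
    by (simp_all split: if_splits)
  show "\<Phi> = \<Psi>"
  proof (rule ccontr)
    assume "\<Phi> \<noteq> \<Psi>"
    with \<open>m = n\<close> \<Phi> \<Psi> \<open>reforms \<Phi> \<Psi>\<close> \<open>reforms \<Psi> \<Phi>\<close>
    have "card (separated_pairs n \<Psi>) < card (separated_pairs n \<Phi>)"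
      "card (separated_pairs n \<Phi>) < card (separated_pairs n \<Psi>)"
      using card_separated_pairs_less by auto
    then show False by simp
  qed
qed

section \<open>Spanning NCQSym\<close>

lemma NCQSym_iff:
  "f \<in> NCQSym \<longleftrightarrow> (\<exists>d. \<forall>w. d < length w \<longrightarrow> f w = 0) \<and> (\<forall>w. 0 \<in> set w \<longrightarrow> f w = 0) \<and>
    (\<forall>n \<Phi> w w'. set_comp n \<Phi> \<longrightarrow> M_pattern n \<Phi> w \<longrightarrow> M_pattern n \<Phi> w' \<longrightarrow> f w = f w')"
  unfolding NCQSym_def by (simp add: M_matches_iff_M_pattern cong: imp_cong)

lemma NCQSymI:
  assumes "\<And>w. d < length w \<Longrightarrow> f w = 0" "\<And>w. 0 \<in> set w \<Longrightarrow> f w = 0"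
    "\<And>n \<Phi> w w'. set_comp n \<Phi> \<Longrightarrow> M_pattern n \<Phi> w \<Longrightarrow> M_pattern n \<Phi> w' \<Longrightarrow> f w = f w'"
  shows "f \<in> NCQSym"
  unfolding NCQSym_iff using assms by blast

lemma NCQSymE:
  assumes "f \<in> NCQSym"
  obtains d where "\<And>w. d < length w \<Longrightarrow> f w = 0"
  using assms unfolding NCQSym_iff by blast

lemma NCQSym_zero_letter: "f \<in> NCQSym \<Longrightarrow> 0 \<in> set w \<Longrightarrow> f w = 0"
  unfolding NCQSym_iff by blast

lemma NCQSym_M_pattern_eq:
  "f \<in> NCQSym \<Longrightarrow> set_comp n \<Phi> \<Longrightarrow> M_pattern n \<Phi> w \<Longrightarrow> M_pattern n \<Phi> w' \<Longrightarrow> f w = f w'"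
  unfolding NCQSym_iff by blast

lemma subspace_NCQSym: "pointwise.subspace (NCQSym :: 'a :: field ncseries set)"
  unfolding pointwise.subspace_def
proof (intro conjI ballI allI)
  show "0 \<in> (NCQSym :: 'a ncseries set)" by (rule NCQSymI) simp_all
next
  fix f g :: "'a ncseries" assume f: "f \<in> NCQSym" and g: "g \<in> NCQSym"
  obtain d where d: "\<And>w. d < length w \<Longrightarrow> f w = 0" using NCQSymE[OF f] by blast
  obtain e where e: "\<And>w. e < length w \<Longrightarrow> g w = 0" using NCQSymE[OF g] by blast
  show "f + g \<in> NCQSym"
  proof (rule NCQSymI[of "max d e"])
    fix n \<Phi> w w' assume pattern: "set_comp n \<Phi>" "M_pattern n \<Phi> w" "M_pattern n \<Phi> w'"
    show "(f + g) w = (f + g) w'"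
      using NCQSym_M_pattern_eq[OF f pattern] NCQSym_M_pattern_eq[OF g pattern] by simp
  qed (use d e NCQSym_zero_letter[OF f] NCQSym_zero_letter[OF g] in simp_all)
next
  fix c :: 'a and f :: "'a ncseries" assume f: "f \<in> NCQSym"
  obtain d where d: "\<And>w. d < length w \<Longrightarrow> f w = 0" using NCQSymE[OF f] by blast
  show "(\<lambda>w. c * f w) \<in> NCQSym"
  proof (rule NCQSymI[of d])
    fix n \<Phi> w w' assume pattern: "set_comp n \<Phi>" "M_pattern n \<Phi> w" "M_pattern n \<Phi> w'"
    show "c * f w = c * f w'"
      using NCQSym_M_pattern_eq[OF f pattern] by simp
  qed (use d NCQSym_zero_letter[OF f] in simp_all)
qed

lemma Mbasis_in_NCQSym:
  assumes \<Psi>: "set_comp n \<Psi>"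
  shows "Mbasis n \<Psi> \<in> NCQSym"
proof (rule NCQSymI[of n])
  have transfer: "M_pattern n \<Psi> w'"
    if "set_comp m \<Phi>" "M_pattern m \<Phi> w" "M_pattern m \<Phi> w'" "M_pattern n \<Psi> w" for m \<Phi> w w'
  proof -
    have "m = n" using that by (simp add: M_pattern_def)
    with that \<Psi> have "\<Phi> = \<Psi>" using M_pattern_unique by blast
    with \<open>m = n\<close> that(3) show ?thesis by simp
  qed
  fix m \<Phi> w w' assume "set_comp m \<Phi>" "M_pattern m \<Phi> w" "M_pattern m \<Phi> w'"
  then show "Mbasis n \<Psi> w = Mbasis n \<Psi> w'"
    using transfer[of m \<Phi> w w'] transfer[of m \<Phi> w' w] by (simp add: Mbasis_eq[OF \<Psi>])
qed (auto simp: Mbasis_eq[OF \<Psi>] M_pattern_def)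

lemma Fbasis_in_NCQSym:
  assumes \<Phi>: "set_comp n \<Phi>"
  shows "Fbasis \<Phi> \<in> NCQSym"
proof -
  have "Fbasis \<Phi> = (\<Sum>\<Psi> | set_comp n \<Psi> \<and> reforms \<Psi> \<Phi>. Mbasis n \<Psi>)"
    by (rule ext) (simp add: sum_fun_apply Fbasis_expansion[OF \<Phi>])
  also have "\<dots> \<in> NCQSym"
    by (rule pointwise.subspace_sum[OF subspace_NCQSym]) (simp add: Mbasis_in_NCQSym)
  finally show ?thesis .
qed

text \<open>Solving the unitriangular expansion for \<open>Mbasis\<close>, by downward induction on the number
  of separated pairs.\<close>

lemma Mbasis_in_span:
  assumes "set_comp n \<Psi>"
  shows "(Mbasis n \<Psi> :: 'a :: field ncseries) \<in> pointwise.span (Fbasis ` all_set_comps)"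
  using assms
proof (induction "n * n - card (separated_pairs n \<Psi>)" arbitrary: \<Psi> rule: less_induct)
  case less
  note \<Psi> = less.prems
  define S where "S = {\<Phi>. set_comp n \<Phi> \<and> reforms \<Phi> \<Psi>}"
  have fin: "finite S"
    unfolding S_def using finite_set_comps by (rule finite_subset[rotated]) blast
  have "\<Psi> \<in> S" using \<Psi> by (simp add: S_def reforms_refl)
  have "(Fbasis \<Psi> :: 'a ncseries) = (\<Sum>\<Phi>\<in>S. Mbasis n \<Phi>)"
    by (rule ext) (simp add: sum_fun_apply Fbasis_expansion[OF \<Psi>] S_def)
  then have M: "(Mbasis n \<Psi> :: 'a ncseries) = Fbasis \<Psi> - (\<Sum>\<Phi>\<in>S - {\<Psi>}. Mbasis n \<Phi>)"
    by (simp add: sum.remove[OF fin \<open>\<Psi> \<in> S\<close>])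
  have "(Fbasis \<Psi> :: 'a ncseries) \<in> pointwise.span (Fbasis ` all_set_comps)"
    by (rule pointwise.span_base) (use \<Psi> in \<open>auto simp: all_set_comps_def\<close>)
  moreover have "(\<Sum>\<Phi>\<in>S - {\<Psi>}. Mbasis n \<Phi> :: 'a ncseries) \<in> pointwise.span (Fbasis ` all_set_comps)"
  proof (rule pointwise.span_sum)
    fix \<Phi> assume "\<Phi> \<in> S - {\<Psi>}"
    then have \<Phi>: "set_comp n \<Phi>" and "reforms \<Phi> \<Psi>" "\<Phi> \<noteq> \<Psi>" by (auto simp: S_def)
    then have "card (separated_pairs n \<Psi>) < card (separated_pairs n \<Phi>)"
      using card_separated_pairs_less[OF \<Psi> \<Phi>] by simp
    with card_separated_pairs_le[of n \<Phi>]
    have "n * n - card (separated_pairs n \<Phi>) < n * n - card (separated_pairs n \<Psi>)" by linarith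
    then show "(Mbasis n \<Phi> :: 'a ncseries) \<in> pointwise.span (Fbasis ` all_set_comps)"
      using less.hyps \<Phi> by blast
  qed
  ultimately show ?case unfolding M by (rule pointwise.span_diff)
qed

lemma NCQSym_eq_sum_Mbasis:
  assumes f: "f \<in> NCQSym" and d: "\<And>w. d < length w \<Longrightarrow> f w = 0"
  shows "f = (\<Sum>(k, \<Psi>)\<in>Sigma {..d} (\<lambda>k. {\<Psi>. set_comp k \<Psi>}). (\<lambda>w. f (canonical_word \<Psi> k) * Mbasis k \<Psi> w))"
    (is "f = (\<Sum>(k, \<Psi>)\<in>?C. ?g k \<Psi>)")
proof (rule ext)
  fix w
  have fin: "finite ?C" using finite_set_comps by blast
  have summand: "?g k \<Psi> w = (if M_pattern k \<Psi> w then f w else 0)" if "(k, \<Psi>) \<in> ?C" for k \<Psi>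
  proof -
    from that have \<Psi>: "set_comp k \<Psi>" by simp
    then show ?thesis
      using NCQSym_M_pattern_eq[OF f \<Psi> M_pattern_canonical_word] by (simp add: Mbasis_eq[OF \<Psi>])
  qed
  have "(\<Sum>(k, \<Psi>)\<in>?C. ?g k \<Psi>) w = (\<Sum>(k, \<Psi>)\<in>?C. if M_pattern k \<Psi> w then f w else 0)"
    unfolding sum_fun_apply by (rule sum.cong) (auto simp: summand)
  also have "\<dots> = f w"
  proof (cases "length w \<le> d \<and> (\<forall>c\<in>set w. 0 < c)")
    case True
    let ?p = "(length w, pack (length w) w)"
    have match_iff: "M_pattern k \<Psi> w \<longleftrightarrow> (k, \<Psi>) = ?p" if "(k, \<Psi>) \<in> ?C" for k \<Psi>
      using that True M_pattern_pack[of w] set_comp_pack[of w] M_pattern_unique[of "length w" \<Psi>]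
      by (auto simp: M_pattern_def)
    have "(\<Sum>(k, \<Psi>)\<in>?C. if M_pattern k \<Psi> w then f w else 0) = (\<Sum>p\<in>?C. if p = ?p then f w else 0)"
      by (rule sum.cong[OF refl]) (auto simp: match_iff split: if_splits)
    also have "\<dots> = f w"
      unfolding sum.delta[OF fin] using True set_comp_pack[of w] by simp
    finally show ?thesis .
  next
    case False
    then have "\<not> M_pattern k \<Psi> w" if "(k, \<Psi>) \<in> ?C" for k \<Psi>
      using that by (auto simp: M_pattern_def)
    moreover have "f w = 0"
      using False d NCQSym_zero_letter[OF f] by (metis not_le gr0I)
    ultimately show ?thesis by (simp add: sum.neutral split_beta)
  qed
  finally show "f w = (\<Sum>(k, \<Psi>)\<in>?C. ?g k \<Psi>) w" by simp
qed

lemma span_Fbasis: "pointwise.span (Fbasis ` all_set_comps) = (NCQSym :: 'a :: field ncseries set)"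
proof
  show "pointwise.span (Fbasis ` all_set_comps) \<subseteq> (NCQSym :: 'a ncseries set)"
    by (intro pointwise.span_minimal subspace_NCQSym) (auto simp: all_set_comps_def Fbasis_in_NCQSym)
  show "(NCQSym :: 'a ncseries set) \<subseteq> pointwise.span (Fbasis ` all_set_comps)"
  proof
    fix f :: "'a ncseries" assume f: "f \<in> NCQSym"
    obtain d where d: "\<And>w. d < length w \<Longrightarrow> f w = 0" using NCQSymE[OF f] by blast
    have "(\<Sum>(k, \<Psi>)\<in>Sigma {..d} (\<lambda>k. {\<Psi>. set_comp k \<Psi>}). (\<lambda>w. f (canonical_word \<Psi> k) * Mbasis k \<Psi> w))
        \<in> pointwise.span (Fbasis ` all_set_comps)"
      by (intro pointwise.span_sum) (auto intro: pointwise.span_scale Mbasis_in_span)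
    then show "f \<in> pointwise.span (Fbasis ` all_set_comps)"
      using NCQSym_eq_sum_Mbasis[OF f d] by simp
  qed
qed

theorem mainTheorem11:
  shows "(\<forall>n \<Phi> w. set_comp n \<Phi> \<longrightarrow>
            (Fbasis \<Phi> :: 'a::field ncseries) w =
              (\<Sum>\<Psi> | set_comp n \<Psi> \<and> reforms \<Psi> \<Phi>. Mbasis n \<Psi> w))
       \<and> inj_on (Fbasis :: nat set list \<Rightarrow> 'a ncseries) all_set_comps
       \<and> Fbasis ` all_set_comps \<subseteq> (NCQSym :: 'a ncseries set)
       \<and> module.independent ser_scale (Fbasis ` all_set_comps :: 'a ncseries set)
       \<and> module.span ser_scale (Fbasis ` all_set_comps) = (NCQSym :: 'a ncseries set)"
  using Fbasis_expansion inj_on_Fbasis Fbasis_in_NCQSym independent_Fbasis span_Fbasis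
  by (auto simp: all_set_comps_def)

end
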